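(* Let $0<q<1$, $x\in\mathbb{C}$ and integers $m\ge n\ge 0$. Then $$\mathcal{P}_n^{(1/4,1/4)}\big(x;q^{m-n}\,\big|\,q\big)=\frac{(q;q)_n}{(q^{m-n+1};q)_n}\,L_n^{(m-n)}\big(x\,q^{-(m+n+1)/2};q\big),$$ where $L_n^{(\rho)}(y;q)$ is the $q$-Laguerre polynomial.
   Context: $(a;q)_0=1$, $(a;q)_k=\prod_{j=0}^{k-1}(1-aq^j)$. For a nonnegative integer $\gamma$ and real $\mu,\nu$, $\mathcal{P}_n^{(\mu,\nu)}(x;q^\gamma|q)=\sum_{k=0}^n\frac{q^{k^2(\mu+\nu)+2\nu\gamma k}(q^{-n};q)_k}{(q;q)_k(q^{\gamma+1};q)_k}x^k$. The $q$-Laguerre polynomials are $$L_n^{(\rho)}(y;q)=\frac{(q^{\rho+1};q)_n}{(q;q)_n}\,{}_1\phi_1\big(q^{-n};q^{\rho+1};q;-y\,q^{n+\rho+1}\big),\qquad {}_1\phi_1(a;b;q;w)=\sum_{k\ge0}\frac{(a;q)_k}{(q;q)_k(b;q)_k}(-1)^kq^{k(k-1)/2}w^k.$$ *)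

theory Defs
  imports Complex_Main
begin

definition qpoch :: "real \<Rightarrow> real \<Rightarrow> nat \<Rightarrow> real" where
  "qpoch a q k = (\<Prod>j<k. 1 - a * q ^ j)"

definition Ppoly :: "real \<Rightarrow> real \<Rightarrow> nat \<Rightarrow> nat \<Rightarrow> real \<Rightarrow> complex \<Rightarrow> complex" where
  "Ppoly \<mu> \<nu> n \<gamma> q x =
     (\<Sum>k=0..n. complex_of_real
        (q powr (real k ^ 2 * (\<mu> + \<nu>) + 2 * \<nu> * real \<gamma> * real k)
         * qpoch (q powr (- real n)) q k / (qpoch q q k * qpoch (q ^ (\<gamma> + 1)) q k))
        * x ^ k)"

definition phi11 :: "real \<Rightarrow> real \<Rightarrow> real \<Rightarrow> complex \<Rightarrow> complex" where
  "phi11 a b q w =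
     (\<Sum>k. complex_of_real (qpoch a q k / (qpoch q q k * qpoch b q k))
           * (-1) ^ k * complex_of_real (q ^ (k * (k - 1) div 2)) * w ^ k)"

definition qLaguerre :: "nat \<Rightarrow> real \<Rightarrow> complex \<Rightarrow> real \<Rightarrow> complex" where
  "qLaguerre n \<rho> y q =
     complex_of_real (qpoch (q powr (\<rho> + 1)) q n / qpoch q q n)
     * phi11 (q powr (- real n)) (q powr (\<rho> + 1)) q
         (- y * complex_of_real (q powr (real n + \<rho> + 1)))"

end

theory Submission
  imports Defs
begin

text \<open>Since (q^-n; q)_k vanishes for k > n, the 1phi1 series of the q-Laguerre polynomial
  terminates at k = n. With rho = m - n and y = x q^(-(m+n+1)/2), its k-th term carries the power
  q^(k(k-1)/2 + k(m+1) - k(m+n+1)/2) = q^(k^2/2 + (m-n)k/2), which is exactly the weight of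
  P_n^(1/4,1/4)(x; q^(m-n) | q); the normalising factors (q^(m-n+1); q)_n / (q; q)_n cancel.\<close>

lemma qpoch_eq_0_powr_neg:
  assumes "0 < q" "n < k"
  shows "qpoch (q powr (- real n)) q k = 0"
proof -
  have "1 - q powr (- real n) * q ^ n = 0"
    using assms by (simp add: powr_minus powr_realpow field_simps)
  with \<open>n < k\<close> show ?thesis
    unfolding qpoch_def by (intro prod_zero) auto
qed

lemma qpoch_neq_0:
  assumes "\<bar>a\<bar> < 1" "\<bar>q\<bar> \<le> 1"
  shows "qpoch a q k \<noteq> 0"
proof -
  have "\<bar>a * q ^ j\<bar> < 1" for j
  proof -
    have "\<bar>q ^ j\<bar> \<le> 1" using assms(2) by (simp add: power_abs power_le_one)
    then have "\<bar>a * q ^ j\<bar> \<le> \<bar>a\<bar>" by (simp add: abs_mult mult_left_le)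
    with assms(1) show ?thesis by linarith
  qed
  then have "a * q ^ j \<noteq> 1" for j
    by (metis abs_one less_irrefl)
  then show ?thesis unfolding qpoch_def by (simp add: prod_zero_iff)
qed

lemma power_triangular_eq_powr:
  assumes "0 < q"
  shows "q ^ (k * (k - 1) div 2) = q powr (real k * (real k - 1) / 2)"
proof -
  have "even (k * (k - 1))" by (cases "even k") auto
  then have "real (k * (k - 1) div 2) = real (k * (k - 1)) / 2"
    by (simp add: real_of_nat_div)
  also have "real (k * (k - 1)) = real k * (real k - 1)"
    by (cases k) (auto simp: algebra_simps)
  finally show ?thesis using assms by (metis powr_realpow)
qed

lemma phi11_terminating:
  assumes "0 < q"
  shows "phi11 (q powr (- real n)) b q w =
    (\<Sum>k=0..n. complex_of_real (qpoch (q powr (- real n)) q k / (qpoch q q k * qpoch b q k))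
       * (-1) ^ k * complex_of_real (q ^ (k * (k - 1) div 2)) * w ^ k)"
  unfolding phi11_def
  by (rule suminf_finite) (auto simp: qpoch_eq_0_powr_neg[OF assms])

lemma phi11_summand_scaled:
  assumes "0 < q"
  shows "(-1) ^ k * complex_of_real (q ^ (k * (k - 1) div 2)) * (- y * complex_of_real (q powr e)) ^ k
    = complex_of_real (q powr (real k * (real k - 1) / 2 + real k * e)) * y ^ k"
proof -
  have signs: "(-1) ^ k * (- y * c) ^ k = y ^ k * c ^ k" for c :: complex
  proof -
    have "(-1) ^ k * (- y * c) ^ k = ((-1) * (- y * c)) ^ k"
      by (rule power_mult_distrib[symmetric])
    then show ?thesis by (simp add: power_mult_distrib)
  qed
  have "q ^ (k * (k - 1) div 2) * (q powr e) ^ k = q powr (real k * (real k - 1) / 2 + real k * e)"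
    unfolding power_triangular_eq_powr[OF assms] using assms by (simp add: powr_power powr_add)
  then show ?thesis
    by (metis signs mult.assoc mult.commute of_real_mult of_real_power)
qed

lemma qLaguerre_eq_sum:
  assumes "0 < q"
  shows "qLaguerre n \<rho> y q =
    complex_of_real (qpoch (q powr (\<rho> + 1)) q n / qpoch q q n)
    * (\<Sum>k=0..n. complex_of_real
        (qpoch (q powr (- real n)) q k / (qpoch q q k * qpoch (q powr (\<rho> + 1)) q k)
         * q powr (real k * (real k - 1) / 2 + real k * (real n + \<rho> + 1))) * y ^ k)"
  unfolding qLaguerre_def phi11_terminating[OF assms]
  by (simp only: mult.assoc phi11_summand_scaled[OF assms, unfolded mult.assoc] of_real_mult)

lemma Ppoly_quarter_eq_sum:
  assumes "0 < q" "n \<le> m"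
  shows "Ppoly (1/4) (1/4) n (m - n) q x =
    (\<Sum>k=0..n. complex_of_real
        (qpoch (q powr (- real n)) q k / (qpoch q q k * qpoch (q ^ (m - n + 1)) q k)
         * q powr (real k * (real k - 1) / 2 + real k * (real n + real (m - n) + 1)))
      * (x * complex_of_real (q powr (- (real m + real n + 1) / 2))) ^ k)"
  unfolding Ppoly_def
proof (rule sum.cong[OF refl])
  fix k
  have "q \<noteq> 0" using assms(1) by simp
  have "real k * (real k - 1) / 2 + real k * (real n + real (m - n) + 1)
      + real k * (- (real m + real n + 1) / 2)
    = real k ^ 2 * (1/4 + 1/4) + 2 * (1/4) * real (m - n) * real k"
    using assms(2) by (simp add: of_nat_diff power2_eq_square field_simps)
  then have exponent: "q powr (real k * (real k - 1) / 2 + real k * (real n + real (m - n) + 1))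
      * (q powr (- (real m + real n + 1) / 2)) ^ k
    = q powr (real k ^ 2 * (1/4 + 1/4) + 2 * (1/4) * real (m - n) * real k)"
    by (simp only: powr_power[OF \<open>q \<noteq> 0\<close>] powr_add[symmetric])
  show "complex_of_real (q powr (real k ^ 2 * (1/4 + 1/4) + 2 * (1/4) * real (m - n) * real k)
      * qpoch (q powr (- real n)) q k / (qpoch q q k * qpoch (q ^ (m - n + 1)) q k)) * x ^ k
    = complex_of_real (qpoch (q powr (- real n)) q k / (qpoch q q k * qpoch (q ^ (m - n + 1)) q k)
        * q powr (real k * (real k - 1) / 2 + real k * (real n + real (m - n) + 1)))
      * (x * complex_of_real (q powr (- (real m + real n + 1) / 2))) ^ k"
    unfolding exponent[symmetric] power_mult_distrib
    by (simp add: algebra_simps)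
qed

theorem mainTheorem3:
  fixes q :: real and x :: complex and m n :: nat
  assumes "0 < q" "q < 1" "n \<le> m"
  shows "Ppoly (1/4) (1/4) n (m - n) q x =
    complex_of_real (qpoch q q n / qpoch (q ^ (m - n + 1)) q n)
    * qLaguerre n (real (m - n)) (x * complex_of_real (q powr (- (real m + real n + 1) / 2))) q"
proof -
  have base: "q powr (real (m - n) + 1) = q ^ (m - n + 1)"
    using assms(1) powr_realpow[of q "m - n + 1"] by (simp add: add.commute)
  have "q ^ (m - n + 1) < 1"
    using assms(1,2) power_Suc_less_one[of q "m - n"] by simp
  then have "qpoch (q ^ (m - n + 1)) q n \<noteq> 0" "qpoch q q n \<noteq> 0"
    using assms(1,2) by (simp_all add: qpoch_neq_0)
  then have prefactors: "complex_of_real (qpoch q q n / qpoch (q ^ (m - n + 1)) q n)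
      * complex_of_real (qpoch (q ^ (m - n + 1)) q n / qpoch q q n) = 1"
    by (simp flip: of_real_mult)
  show ?thesis
    unfolding Ppoly_quarter_eq_sum[OF assms(1,3)] qLaguerre_eq_sum[OF assms(1)] base
    by (simp only: mult.assoc[symmetric] prefactors mult_1)
qed

end
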